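(* For $m,n\ge2$, \[ \sum_{k=2}^m\sum_{l=2}^n\frac{(-1)^{k+l}G_{k,l}}{m-k+n-l+1}=\frac{1}{m+n-1}-\frac{1}{mn}. \]
   Context: The generalized Gregory coefficients $G_{m,n}$ are defined by $\sum_{m,n\ge0}G_{m,n}x^my^n=\dfrac{y\log^2(1+x)-x\log^2(1+y)}{\log(1+x)-\log(1+y)}$ (formal power series; $\log^ku=(\log u)^k$). *)

theory Defs
  imports "HOL-Computational_Algebra.Formal_Power_Series"
begin

text \<open>Bivariate formal power series in x and y are modelled as real fps fps:
  the outer variable is x, the coefficients are power series in y.\<close>

definition bX :: "real fps fps" where "bX = fps_X"
definition bY :: "real fps fps" where "bY = fps_const fps_X"

text \<open>log(1+x) and log(1+y) as bivariate series\<close>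
definition logX :: "real fps fps" where
  "logX = Abs_fps (\<lambda>m. fps_const (fps_nth (fps_ln 1) m))"
definition logY :: "real fps fps" where
  "logY = fps_const (fps_ln 1)"

text \<open>The generating series: the (unique, as real fps fps is an integral domain)
  series F with (log(1+x) - log(1+y)) * F = y log^2(1+x) - x log^2(1+y).\<close>
definition gregory_gf :: "real fps fps" where
  "gregory_gf = (THE F. (logX - logY) * F = bY * logX ^ 2 - bX * logY ^ 2)"

definition gen_gregory :: "nat \<Rightarrow> nat \<Rightarrow> real" where
  "gen_gregory m n = fps_nth (fps_nth gregory_gf m) n"

end

theory Submission
  imports Defs
begin

text \<open>Write $L_x = \log(1+x)$, $L_y = \log(1+y)$ and $Q = (L_x - L_y)/(x - y)$, whose
  coefficients are $Q_{p,q} = (-1)^{p+q}/(p+q+1)$. Removing from the generating series $G$ its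
  rows and columns of index $0$ and $1$ (which are known: $G_{k,0} = 0$, $G_{k,1} = [x^k] L_x$,
  and symmetrically) leaves $T = G - L_x y - x L_y + x y$, and from $(L_x - L_y) G = y L_x^2 - x L_y^2$
  one gets $(x - y) \, T Q = (x - y)(x y Q - L_x L_y)$. Cancelling $x - y$ and comparing the
  coefficients of $x^m y^n$ on both sides gives the identity, the left-hand side being the
  convolution of $T$ with $Q$.\<close>

unbundle fps_syntax

abbreviation log1p_fps :: "real fps" where "log1p_fps \<equiv> fps_ln 1"

definition log_quotient :: "real fps fps" where
  "log_quotient = Abs_fps (\<lambda>p. Abs_fps (\<lambda>q. (-1) ^ (p + q) / real (p + q + 1)))"

lemma logX_nth [simp]: "logX $ k = fps_const (log1p_fps $ k)"
  by (simp add: logX_def)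

lemma logY_nth [simp]: "logY $ k = (if k = 0 then log1p_fps else 0)"
  by (simp add: logY_def)

lemma log_quotient_nth [simp]: "log_quotient $ p $ q = (-1) ^ (p + q) / real (p + q + 1)"
  by (simp add: log_quotient_def)

lemma fps_mult_nth_nth:
  fixes f g :: "'a::comm_semiring_0 fps fps"
  shows "(f * g) $ m $ n = (\<Sum>k=0..m. \<Sum>l=0..n. f $ k $ l * g $ (m - k) $ (n - l))"
  by (simp add: fps_mult_nth fps_sum_nth)

lemma divided_difference_log:
  "(bX - bY) * log_quotient = logX - logY"
proof (rule fps_ext, rule fps_ext)
  fix p q
  show "((bX - bY) * log_quotient) $ p $ q = (logX - logY) $ p $ q"
    by (cases p; cases q) (auto simp: bX_def bY_def algebra_simps fps_ln_nth)
qed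

lemma bX_neq_bY: "bX \<noteq> bY"
proof
  assume "bX = bY"
  then have "bX $ 1 $ 0 = bY $ 1 $ 0" by (simp only:)
  then show False by (simp add: bX_def bY_def)
qed

lemma logX_minus_logY_nonzero: "logX - logY \<noteq> 0"
proof
  assume "logX - logY = 0"
  then have "(logX - logY) $ 1 $ 0 = 0" by simp
  then show False by (simp add: fps_ln_nth)
qed

lemma logX_minus_logY_divides_bX_minus_bY:
  obtains W where "(logX - logY) * W = bX - bY"
proof -
  have "log_quotient $ 0 $ 0 \<noteq> 0"
    by simp
  then have "log_quotient $ 0 * inverse (log_quotient $ 0) = 1"
    using inverse_mult_eq_1[of "log_quotient $ 0"] by (simp add: mult.commute)
  then have "log_quotient * fps_right_inverse log_quotient (inverse (log_quotient $ 0)) = 1"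
    by (rule fps_right_inverse)
  with divided_difference_log show ?thesis
    by (intro that[of "fps_right_inverse log_quotient (inverse (log_quotient $ 0))"])
      (metis mult.assoc mult.right_neutral)
qed

lemma quotient_of_squares_difference:
  fixes u v s t w :: "'a::comm_ring_1"
  assumes "(u - v) * w = s - t"
  shows "(u - v) * ((u + v) * t - v\<^sup>2 * w) = t * u\<^sup>2 - s * v\<^sup>2"
    and "(u - v) * ((u + v) * s - u\<^sup>2 * w) = t * u\<^sup>2 - s * v\<^sup>2"
proof -
  have "(u - v) * ((u + v) * t - v\<^sup>2 * w) = (u - v) * (u + v) * t - v\<^sup>2 * ((u - v) * w)"
    by (simp add: algebra_simps)
  then show "(u - v) * ((u + v) * t - v\<^sup>2 * w) = t * u\<^sup>2 - s * v\<^sup>2"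
    unfolding assms by (simp add: algebra_simps power2_eq_square)
  have "(u - v) * ((u + v) * s - u\<^sup>2 * w) = (u - v) * (u + v) * s - u\<^sup>2 * ((u - v) * w)"
    by (simp add: algebra_simps)
  then show "(u - v) * ((u + v) * s - u\<^sup>2 * w) = t * u\<^sup>2 - s * v\<^sup>2"
    unfolding assms by (simp add: algebra_simps power2_eq_square)
qed

lemma gregory_gf_eqI:
  assumes "(logX - logY) * F = bY * logX\<^sup>2 - bX * logY\<^sup>2"
  shows "gregory_gf = F"
  unfolding gregory_gf_def
proof (rule the_equality)
  fix F' assume "(logX - logY) * F' = bY * logX\<^sup>2 - bX * logY\<^sup>2"
  with assms show "F' = F"
    using logX_minus_logY_nonzero mult_left_cancel by metis
qed (fact assms)

text \<open>Here $W = (x - y)/(L_x - L_y)$; the first form exhibits the columns $l \<le> 1$ of $G$,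
  the second its rows $k \<le> 1$.\<close>

lemma gregory_gf_closed_forms:
  obtains W where "gregory_gf = (logX + logY) * bY - logY\<^sup>2 * W"
    and "gregory_gf = (logX + logY) * bX - logX\<^sup>2 * W"
proof -
  obtain W where "(logX - logY) * W = bX - bY"
    by (rule logX_minus_logY_divides_bX_minus_bY)
  from quotient_of_squares_difference[OF this] show ?thesis
    by (intro that gregory_gf_eqI)
qed

lemma gregory_gf_equation: "(logX - logY) * gregory_gf = bY * logX\<^sup>2 - bX * logY\<^sup>2"
proof -
  obtain W where "(logX - logY) * W = bX - bY"
    by (rule logX_minus_logY_divides_bX_minus_bY)
  note solution = quotient_of_squares_difference(1)[OF this]
  with gregory_gf_eqI[OF solution] show ?thesis
    by simp
qed

lemma gregory_gf_nth_0: "gregory_gf $ 0 = 0"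
  and gregory_gf_nth_1: "gregory_gf $ 1 = log1p_fps"
proof -
  obtain W where G: "gregory_gf = (logX + logY) * bX - logX\<^sup>2 * W"
    by (rule gregory_gf_closed_forms)
  have "(logX\<^sup>2) $ 0 = 0" "(logX\<^sup>2) $ 1 = 0"
    by (simp_all add: power2_eq_square fps_ln_nth)
  then show "gregory_gf $ 0 = 0" "gregory_gf $ 1 = log1p_fps"
    unfolding G by (simp_all add: bX_def fps_mult_nth_1 fps_ln_nth)
qed

lemma gregory_gf_nth_nth_0: "gregory_gf $ k $ 0 = 0"
  and gregory_gf_nth_nth_1: "gregory_gf $ k $ 1 = log1p_fps $ k"
proof -
  obtain W where G: "gregory_gf = (logX + logY) * bY - logY\<^sup>2 * W"
    by (rule gregory_gf_closed_forms)
  have "logY\<^sup>2 = fps_const (log1p_fps\<^sup>2)"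
    by (simp add: logY_def)
  moreover have "(log1p_fps\<^sup>2) $ 0 = 0" "(log1p_fps\<^sup>2) $ 1 = 0"
    by (simp_all add: power2_eq_square fps_ln_nth)
  ultimately show "gregory_gf $ k $ 0 = 0" "gregory_gf $ k $ 1 = log1p_fps $ k"
    unfolding G by (simp_all add: bY_def fps_mult_nth_1)
qed

definition gregory_gf_trunc :: "real fps fps" where
  "gregory_gf_trunc =
     Abs_fps (\<lambda>k. Abs_fps (\<lambda>l. if 2 \<le> k \<and> 2 \<le> l then gregory_gf $ k $ l else 0))"

lemma gregory_gf_trunc_eq: "gregory_gf_trunc = gregory_gf - logX * bY - bX * logY + bX * bY"
proof (rule fps_ext, rule fps_ext)
  fix k l :: nat
  consider "k = 0" | "k = 1" | "k \<ge> 2" "l = 0" | "k \<ge> 2" "l = 1" | "k \<ge> 2" "l \<ge> 2"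
    by linarith
  then show "gregory_gf_trunc $ k $ l = (gregory_gf - logX * bY - bX * logY + bX * bY) $ k $ l"
    by cases (auto simp: gregory_gf_trunc_def bX_def bY_def fps_ln_nth gregory_gf_nth_0
        gregory_gf_nth_1[simplified] gregory_gf_nth_nth_0 gregory_gf_nth_nth_1[simplified])
qed

lemma cancel_boundary_terms:
  fixes s t u v q g :: "'a::idom"
  assumes "s \<noteq> t" and "(s - t) * q = u - v" and "(u - v) * g = t * u\<^sup>2 - s * v\<^sup>2"
  shows "(g - u * t - s * v + s * t) * q = s * t * q - u * v"
proof -
  have "(s - t) * ((g - u * t - s * v + s * t) * q) = (s - t) * (s * t * q - u * v)"
    using assms(2,3) by algebra
  with assms(1) show ?thesis
    by simp
qed

lemma gregory_gf_trunc_times_log_quotient: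
  "gregory_gf_trunc * log_quotient = bX * bY * log_quotient - logX * logY"
  using cancel_boundary_terms[OF bX_neq_bY divided_difference_log gregory_gf_equation]
  unfolding gregory_gf_trunc_eq .

lemma gregory_gf_trunc_times_log_quotient_nth:
  "(gregory_gf_trunc * log_quotient) $ m $ n =
     (\<Sum>k=2..m. \<Sum>l=2..n. gregory_gf $ k $ l * log_quotient $ (m - k) $ (n - l))"
proof -
  have "(gregory_gf_trunc * log_quotient) $ m $ n =
     (\<Sum>k=2..m. \<Sum>l=0..n. gregory_gf_trunc $ k $ l * log_quotient $ (m - k) $ (n - l))"
    unfolding fps_mult_nth_nth
    by (rule sum.mono_neutral_right) (auto simp: gregory_gf_trunc_def)
  also have "\<dots> = (\<Sum>k=2..m. \<Sum>l=2..n. gregory_gf $ k $ l * log_quotient $ (m - k) $ (n - l))"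
    by (intro sum.cong refl trans[OF sum.mono_neutral_right])
      (auto simp: gregory_gf_trunc_def)
  finally show ?thesis .
qed

lemma XY_log_quotient_minus_logX_logY_nth:
  assumes "m \<ge> 1" and "n \<ge> 1"
  shows "(bX * bY * log_quotient - logX * logY) $ m $ n =
           (-1) ^ (m + n) * (1 / (real m + real n - 1) - 1 / (real m * real n))"
proof -
  obtain a b where "m = Suc a" "n = Suc b"
    using assms by (cases m; cases n) auto
  then show ?thesis
    by (simp add: bX_def bY_def logY_def fps_ln_nth power_add field_simps)
qed

lemma minus_one_power_diff:
  assumes "j \<le> i"
  shows "(-1::'a::comm_ring_1) ^ (i - j) = (-1) ^ i * (-1) ^ j"
proof -
  have "(-1::'a) ^ i = (-1) ^ (i - j) * (-1) ^ j"
    using assms by (simp flip: power_add)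
  then show ?thesis
    by (simp add: mult.assoc)
qed

theorem theorem5p6:
  fixes m n :: nat
  assumes "m \<ge> 2" and "n \<ge> 2"
  shows "(\<Sum>k=2..m. \<Sum>l=2..n. (-1) ^ (k + l) * gen_gregory k l
            / (real m - real k + real n - real l + 1))
         = 1 / (real m + real n - 1) - 1 / (real m * real n)"
proof -
  have summand: "(-1) ^ (k + l) * gen_gregory k l / (real m - real k + real n - real l + 1)
      = (-1) ^ (m + n) * (gregory_gf $ k $ l * log_quotient $ (m - k) $ (n - l))"
    if "k \<le> m" "l \<le> n" for k l
    using that minus_one_power_diff[of "k + l" "m + n", where 'a=real]
    by (simp add: gen_gregory_def algebra_simps)
  have "(\<Sum>k=2..m. \<Sum>l=2..n. (-1) ^ (k + l) * gen_gregory k l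
            / (real m - real k + real n - real l + 1))
      = (-1) ^ (m + n) * (gregory_gf_trunc * log_quotient) $ m $ n"
    unfolding gregory_gf_trunc_times_log_quotient_nth sum_distrib_left
    using summand by (intro sum.cong refl) auto
  also have "\<dots> = 1 / (real m + real n - 1) - 1 / (real m * real n)"
    using assms unfolding gregory_gf_trunc_times_log_quotient
    by (subst XY_log_quotient_minus_logX_logY_nth) (simp_all flip: power_add)
  finally show ?thesis .
qed

end
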